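(* Let $A,B\in\mathrm{SL}_2\mathbb{Z}$ be noncommuting, well oriented, with $2\le\mathrm{tr}(A)<\mathrm{tr}(B)$ and $\mathrm{tr}(AB)>\mathrm{tr}(B^2)$, and assume $[(ab^2)^2]\le[(ab)^3]-2$. Fix a word $w$ and let $k\ge1$ be such that the length of $wab^2(ab)^kab^2$ is a multiple of $6$. If $w$ is empty, or is a product of copies of $ab$ and $ab^2$, then $[wab^2(ab)^kab^2]<[w(ab)^{k+3}]$.
   Context: Words are finite strings over $\{a,b\}$; $\phi$ is the monoid homomorphism with $\phi(a)=A,\phi(b)=B$, and $[w]=\mathrm{tr}(\phi(w))$. Fixed points are for the Möbius action on $\partial\mathcal{H}=\mathbb{P}^1\mathbb{R}$; $\alpha^\pm$ ($\beta^\pm$) are the attracting/repelling fixed points of $A$ ($B$), both equal to the unique fixed point if parabolic. With $\partial\mathcal{H}$ cyclically ordered and $[\alpha,\beta]$ the closed counterclockwise interval from $\alpha$ to $\beta$, let $I^+=\{\alpha^+\}$ if $\alpha^+=\beta^+$, and otherwise the one of $[\alpha^+,\beta^+],[\beta^+,\alpha^+]$ mapped into itself by both $A$ and $B$ (if it exists); define $I^-$ likewise with $A^{-1},B^{-1},\alpha^-,\beta^-$. The pair is coherently oriented if both exist, and well oriented if $A,B$ is coherently oriented but $A,B^{-1}$ is not. *)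

theory Defs
  imports "HOL-Analysis.Analysis"
begin

type_synonym mat2 = "int^2^2"

definition SL2Z :: "mat2 set" where
  "SL2Z = {M. det M = 1}"

definition sl2_inv :: "mat2 \<Rightarrow> mat2" where
  "sl2_inv M = (\<chi> i j. if i = 1 \<and> j = 1 then M $ 2 $ 2
                     else if i = 1 \<and> j = 2 then - M $ 1 $ 2
                     else if i = 2 \<and> j = 1 then - M $ 2 $ 1
                     else M $ 1 $ 1)"

datatype letter = La | Lb

definition phi :: "mat2 \<Rightarrow> mat2 \<Rightarrow> letter list \<Rightarrow> mat2" where
  "phi A B w = foldr (\<lambda>c M. (case c of La \<Rightarrow> A | Lb \<Rightarrow> B) ** M) w (mat 1)"

definition wtr :: "mat2 \<Rightarrow> mat2 \<Rightarrow> letter list \<Rightarrow> int" where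
  "wtr A B w = trace (phi A B w)"

text \<open>The projective line P^1(R) = boundary of H, as R plus a point at infinity (None).\<close>
type_synonym pt = "real option"

definition mob :: "mat2 \<Rightarrow> pt \<Rightarrow> pt" where
  "mob M p = (let a = real_of_int (M$1$1); b = real_of_int (M$1$2);
                  c = real_of_int (M$2$1); d = real_of_int (M$2$2) in
     case p of
       None \<Rightarrow> (if c = 0 then None else Some (a / c))
     | Some x \<Rightarrow> (if c * x + d = 0 then None else Some ((a * x + b) / (c * x + d))))"

definition fixpt :: "mat2 \<Rightarrow> pt \<Rightarrow> bool" where
  "fixpt M p \<longleftrightarrow> mob M p = p"

text \<open>Multiplier at a fixed point: the eigenvalue of the corresponding eigenvector
  (x,1) resp. (1,0). The derivative of the Moebius map there is its inverse square,
  so the fixed point is attracting iff |mult| > 1, repelling iff |mult| < 1,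
  and |mult| = 1 in the parabolic case.\<close>
definition fp_mult :: "mat2 \<Rightarrow> pt \<Rightarrow> real" where
  "fp_mult M p = (case p of None \<Rightarrow> real_of_int (M$1$1)
                   | Some x \<Rightarrow> real_of_int (M$2$1) * x + real_of_int (M$2$2))"

text \<open>Attracting / repelling fixed point (both equal the unique fixed point if parabolic).\<close>
definition attr :: "mat2 \<Rightarrow> pt" where
  "attr M = (THE p. fixpt M p \<and> \<bar>fp_mult M p\<bar> \<ge> 1)"

definition repel :: "mat2 \<Rightarrow> pt" where
  "repel M = (THE p. fixpt M p \<and> \<bar>fp_mult M p\<bar> \<le> 1)"

text \<open>Closed counterclockwise interval [p,q] on the boundary of H
  (counterclockwise = increasing along R, then through infinity).\<close>
definition ccw_int :: "pt \<Rightarrow> pt \<Rightarrow> pt set" where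
  "ccw_int p q = (if p = q then {p} else
     (case (p, q) of
        (Some x, Some y) \<Rightarrow> (if x \<le> y then Some ` {x..y}
                             else Some ` {x..} \<union> {None} \<union> Some ` {..y})
      | (None, Some y) \<Rightarrow> {None} \<union> Some ` {..y}
      | (Some x, None) \<Rightarrow> Some ` {x..} \<union> {None}
      | (None, None) \<Rightarrow> {None}))"

definition invariant_int :: "mat2 \<Rightarrow> mat2 \<Rightarrow> pt set \<Rightarrow> bool" where
  "invariant_int A B I \<longleftrightarrow> mob A ` I \<subseteq> I \<and> mob B ` I \<subseteq> I"

definition Iplus_exists :: "mat2 \<Rightarrow> mat2 \<Rightarrow> bool" where
  "Iplus_exists A B \<longleftrightarrow> attr A = attr B \<or>
     invariant_int A B (ccw_int (attr A) (attr B)) \<or>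
     invariant_int A B (ccw_int (attr B) (attr A))"

definition Iminus_exists :: "mat2 \<Rightarrow> mat2 \<Rightarrow> bool" where
  "Iminus_exists A B \<longleftrightarrow> repel A = repel B \<or>
     invariant_int (sl2_inv A) (sl2_inv B) (ccw_int (repel A) (repel B)) \<or>
     invariant_int (sl2_inv A) (sl2_inv B) (ccw_int (repel B) (repel A))"

definition coherently_oriented :: "mat2 \<Rightarrow> mat2 \<Rightarrow> bool" where
  "coherently_oriented A B \<longleftrightarrow> Iplus_exists A B \<and> Iminus_exists A B"

definition well_oriented :: "mat2 \<Rightarrow> mat2 \<Rightarrow> bool" where
  "well_oriented A B \<longleftrightarrow> coherently_oriented A B \<and> \<not> coherently_oriented A (sl2_inv B)"

definition pw :: "letter list \<Rightarrow> nat \<Rightarrow> letter list" where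
  "pw u n = concat (replicate n u)"

end

theory Submission
  imports Defs
begin

(* Put X = AB and Y = AB^2; both are hyperbolic, with expanding eigenvalues a and b. Writing
   X = a^-1 + (a - a^-1) P and Y = b^-1 + (b - b^-1) Q, where P and Q are the rank-one projections
   onto the expanding eigenlines, the relations P^2 = P, Q^2 = Q, PQP = t P, QPQ = t Q (t = tr PQ)
   show that every product W of copies of X and Y lies in c + cone {P, Q, PQ, QP} with c > 0.
   So tr (W (X^(k+3) - Y X^k Y)) > 0 follows once tr (G (X^(k+3) - Y X^k Y)) is positive for G = 1
   and nonnegative for the four generators G.  These five traces are explicit in a, b, a^k, t and
   m = tr (PY), and they have the right sign as soon as b <= m, m^2 <= a^3 and
   b^2 + b^-2 < a^3 + a^-3, which is what the trace hypotheses (and the integrality of tr AB) give. *)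

lemma matrix_add_rdistrib: "(A + B) ** C = A ** C + B ** (C :: 'a::semiring_1^'n^'m)"
  by (vector matrix_matrix_mult_def sum.distrib[symmetric] field_simps)

lemma matrix_diff_ldistrib: "A ** (B - C) = A ** B - A ** (C :: 'a::ring_1^'n^'m)"
  by (vector matrix_matrix_mult_def sum_subtractf[symmetric] field_simps)

lemma matrix_diff_rdistrib: "(A - B) ** C = A ** C - B ** (C :: 'a::ring_1^'n^'m)"
  by (vector matrix_matrix_mult_def sum_subtractf[symmetric] field_simps)

lemma matrix_scaleR_left: "(c *\<^sub>R A) ** B = c *\<^sub>R (A ** B :: 'a::real_algebra_1^'n^'m)"
  by (simp add: scalar_matrix_assoc)

lemma matrix_scaleR_right: "A ** (c *\<^sub>R B) = c *\<^sub>R (A ** B :: 'a::real_algebra_1^'n^'m)"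
  by (simp add: matrix_scalar_ac scalar_matrix_assoc)

lemma trace_scaleR: "trace (c *\<^sub>R A) = c *\<^sub>R trace (A :: 'a::real_algebra_1^'n^'n)"
  by (simp add: trace_def scaleR_sum_right)

lemmas matrix_expand = matrix_add_ldistrib matrix_add_rdistrib matrix_diff_ldistrib
  matrix_diff_rdistrib matrix_scaleR_left matrix_scaleR_right matrix_mul_lid matrix_mul_rid

lemma linear_matrix_mult_right: "linear (\<lambda>V. V ** (M :: real^'n^'n))"
  by (rule linearI) (simp_all add: matrix_add_rdistrib matrix_scaleR_left)

lemma linear_trace_mult_right: "linear (\<lambda>V. trace (V ** (M :: real^'n^'n)))"
  by (rule linearI) (simp_all add: matrix_add_rdistrib matrix_scaleR_left trace_add trace_scaleR)

lemma scaled_identity_plus_mult: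
  fixes V G :: "real^'n^'n"
  shows "(c *\<^sub>R mat 1 + V) ** (\<alpha> *\<^sub>R mat 1 + \<beta> *\<^sub>R G)
    = (c * \<alpha>) *\<^sub>R mat 1 + ((c * \<beta>) *\<^sub>R G + \<alpha> *\<^sub>R V + \<beta> *\<^sub>R (V ** G))"
  by (simp add: matrix_expand scaleR_add_right mult.commute)

primrec mat_pow :: "'a::semiring_1^'n^'n \<Rightarrow> nat \<Rightarrow> 'a^'n^'n" where
  "mat_pow M 0 = mat 1"
| "mat_pow M (Suc n) = M ** mat_pow M n"

lemma matrix_square_2x2:
  fixes M :: "real^2^2"
  shows "M ** M = trace M *\<^sub>R M - det M *\<^sub>R mat 1"
  by (simp add: vec_eq_iff forall_2 matrix_matrix_mult_def sum_2 trace_def det_2 mat_def algebra_simps)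

lemma rank_one_sandwich:
  fixes P M :: "real^2^2"
  assumes "det P = 0"
  shows "P ** M ** P = trace (P ** M) *\<^sub>R P"
  using assms by (simp add: vec_eq_iff forall_2 matrix_matrix_mult_def sum_2 trace_def det_2 algebra_simps)

lemma trace_mult_square:
  fixes A B :: "real^2^2"
  assumes "det B = 1"
  shows "trace (A ** B ** B) = trace B * trace (A ** B) - trace A"
  using matrix_square_2x2[of B] assms
  by (simp add: matrix_mul_assoc[symmetric] matrix_expand trace_sub trace_scaleR)

lemma trace_mat_pow_2x2:
  fixes M :: "real^2^2"
  assumes "det M = 1"
  shows "trace (mat_pow M 2) = (trace M)^2 - 2"
    and "trace (mat_pow M 3) = (trace M)^3 - 3 * trace M"
proof -
  have sq: "M ** M = trace M *\<^sub>R M - mat 1" using matrix_square_2x2[of M] assms by simp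
  have p2: "mat_pow M 2 = M ** M" and p3: "mat_pow M 3 = trace M *\<^sub>R (M ** M) - M"
    by (simp_all add: numeral_2_eq_2 numeral_3_eq_3 sq matrix_expand)
  show "trace (mat_pow M 2) = (trace M)^2 - 2"
    unfolding p2 sq by (simp add: trace_sub trace_scaleR trace_I power2_eq_square)
  show "trace (mat_pow M 3) = (trace M)^3 - 3 * trace M"
    unfolding p3 sq by (simp add: trace_sub trace_scaleR trace_I power3_eq_cube right_diff_distrib)
qed

section \<open>The trace inequality for a hyperbolic pair\<close>

inductive_set generated_monoid :: "'a::semiring_1^'n^'n \<Rightarrow> 'a^'n^'n \<Rightarrow> ('a^'n^'n) set"
  for X Y where
  one: "mat 1 \<in> generated_monoid X Y"
| mult_X: "W \<in> generated_monoid X Y \<Longrightarrow> W ** X \<in> generated_monoid X Y"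
| mult_Y: "W \<in> generated_monoid X Y \<Longrightarrow> W ** Y \<in> generated_monoid X Y"

lemma convex_cone_hull_linear_preimage:
  assumes "linear f" and "convex_cone C" and "f ` S \<subseteq> C" and "x \<in> convex_cone hull S"
  shows "f x \<in> C"
  using assms(4)
proof (rule hull_induct)
  show "f x \<in> C" if "x \<in> S" for x using assms(3) that by blast
  show "convex_cone {x. f x \<in> C}"
    using assms(1,2) by (simp add: convex_cone_iff linear_0 linear_add linear_scale)
qed

lemma minus_inverse_pos:
  assumes "1 < (x::real)"
  shows "0 < x - 1/x"
proof -
  have "1/x < 1" using assms by simp
  then show ?thesis using assms by linarith
qed

locale hyperbolic_pair =
  fixes X Y P Q :: "real^2^2" and a b :: real
  assumes trace_P: "trace P = 1" and det_P: "det P = 0"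
    and trace_Q: "trace Q = 1" and det_Q: "det Q = 0"
    and a_gt_1: "1 < a" and b_gt_1: "1 < b"
    and X_eq: "X = (1/a) *\<^sub>R mat 1 + (a - 1/a) *\<^sub>R P"
    and Y_eq: "Y = (1/b) *\<^sub>R mat 1 + (b - 1/b) *\<^sub>R Q"
begin

lemma idem_P: "P ** P = P"
  using matrix_square_2x2[of P] by (simp add: trace_P det_P)

lemma idem_Q: "Q ** Q = Q"
  using matrix_square_2x2[of Q] by (simp add: trace_Q det_Q)

lemma PQP: "P ** Q ** P = trace (P ** Q) *\<^sub>R P"
  using rank_one_sandwich[OF det_P] .

lemma QPQ: "Q ** P ** Q = trace (P ** Q) *\<^sub>R Q"
  using rank_one_sandwich[OF det_Q, of P] by (simp only: trace_mul_sym[of Q P])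

lemma word_reduce:
  "V ** P ** P = V ** P" "V ** Q ** Q = V ** Q"
  "V ** P ** Q ** P = trace (P ** Q) *\<^sub>R (V ** P)"
  "V ** Q ** P ** Q = trace (P ** Q) *\<^sub>R (V ** Q)"
  by (metis idem_P matrix_mul_assoc, metis idem_Q matrix_mul_assoc,
      metis PQP matrix_mul_assoc matrix_scaleR_right, metis QPQ matrix_mul_assoc matrix_scaleR_right)

(* Every product of P and Q reduces to one of P, Q, PQ, QP, so these rules turn the trace of any
   polynomial in P and Q into a scalar expression in t = tr PQ. *)
lemmas normalize_words = matrix_expand matrix_mul_assoc idem_P idem_Q PQP QPQ word_reduce
  trace_add trace_sub trace_scaleR trace_mul_sym[of Q P] trace_P trace_Q trace_I

lemma mat_pow_X: "mat_pow X n = (1/a^n) *\<^sub>R mat 1 + (a^n - 1/a^n) *\<^sub>R P"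
proof (induction n)
  case (Suc n)
  have "mat_pow X (Suc n) = X ** ((1/a^n) *\<^sub>R mat 1 + (a^n - 1/a^n) *\<^sub>R P)"
    by (simp only: mat_pow.simps Suc.IH)
  also have "\<dots> = (1/a^Suc n) *\<^sub>R mat 1 + (a^Suc n - 1/a^Suc n) *\<^sub>R P"
    using a_gt_1 by (simp add: X_eq matrix_expand idem_P algebra_simps)
  finally show ?case .
qed simp

lemma trace_P_Y: "trace (P ** Y) = 1/b + (b - 1/b) * trace (P ** Q)"
  by (simp add: Y_eq normalize_words)

definition PQ_cone where "PQ_cone = convex_cone hull {P, Q, P ** Q, Q ** P}"

lemma
  assumes "0 \<le> trace (P ** Q)" and "V \<in> PQ_cone"
  shows PQ_cone_mult_P: "V ** P \<in> PQ_cone" and PQ_cone_mult_Q: "V ** Q \<in> PQ_cone"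
proof -
  have "trace (P ** Q) *\<^sub>R P \<in> PQ_cone" and "trace (P ** Q) *\<^sub>R Q \<in> PQ_cone"
    using assms(1) by (simp_all add: PQ_cone_def convex_cone_hull_mul hull_inc)
  then have "(\<lambda>V. V ** P) ` {P, Q, P ** Q, Q ** P} \<subseteq> PQ_cone"
    and "(\<lambda>V. V ** Q) ` {P, Q, P ** Q, Q ** P} \<subseteq> PQ_cone"
    by (auto simp: PQ_cone_def idem_P idem_Q PQP QPQ word_reduce intro: hull_inc)
  then show "V ** P \<in> PQ_cone" and "V ** Q \<in> PQ_cone"
    using convex_cone_hull_linear_preimage[OF linear_matrix_mult_right convex_cone_convex_cone_hull]
      assms(2) unfolding PQ_cone_def by blast+
qed

lemma scaled_identity_plus_PQ_cone_mult:
  assumes "0 \<le> trace (P ** Q)" and "0 < c" and "V \<in> PQ_cone"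
    and "0 < \<alpha>" and "0 \<le> \<beta>" and "G \<in> {P, Q}"
  shows "\<exists>c' > 0. \<exists>V' \<in> PQ_cone.
    (c *\<^sub>R mat 1 + V) ** (\<alpha> *\<^sub>R mat 1 + \<beta> *\<^sub>R G) = c' *\<^sub>R mat 1 + V'"
proof (intro exI bexI conjI)
  show "(c *\<^sub>R mat 1 + V) ** (\<alpha> *\<^sub>R mat 1 + \<beta> *\<^sub>R G)
    = (c * \<alpha>) *\<^sub>R mat 1 + ((c * \<beta>) *\<^sub>R G + \<alpha> *\<^sub>R V + \<beta> *\<^sub>R (V ** G))"
    by (rule scaled_identity_plus_mult)
  have "V ** G \<in> PQ_cone" using assms(1,3,6) PQ_cone_mult_P PQ_cone_mult_Q by blast
  then show "(c * \<beta>) *\<^sub>R G + \<alpha> *\<^sub>R V + \<beta> *\<^sub>R (V ** G) \<in> PQ_cone"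
    using assms unfolding PQ_cone_def
    by (intro convex_cone_hull_add convex_cone_hull_mul) (auto intro: hull_inc)
qed (use assms in simp)

lemma generated_monoid_in_PQ_cone:
  assumes "0 \<le> trace (P ** Q)" and "W \<in> generated_monoid X Y"
  shows "\<exists>c > 0. \<exists>V \<in> PQ_cone. W = c *\<^sub>R mat 1 + V"
  using assms(2)
proof induction
  case one
  show ?case
    by (intro exI[of _ 1] bexI[of _ 0]) (simp_all add: PQ_cone_def convex_cone_hull_contains_0)
next
  case (mult_X W)
  then obtain c V where "0 < c" "V \<in> PQ_cone" "W = c *\<^sub>R mat 1 + V" by blast
  then show ?case
    using scaled_identity_plus_PQ_cone_mult[OF assms(1), of c V "1/a" "a - 1/a" P]
      a_gt_1 minus_inverse_pos[of a] by (simp add: X_eq)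
next
  case (mult_Y W)
  then obtain c V where "0 < c" "V \<in> PQ_cone" "W = c *\<^sub>R mat 1 + V" by blast
  then show ?case
    using scaled_identity_plus_PQ_cone_mult[OF assms(1), of c V "1/b" "b - 1/b" Q]
      b_gt_1 minus_inverse_pos[of b] by (simp add: Y_eq)
qed

lemma trace_mult_pos_on_generated_monoid:
  assumes "0 \<le> trace (P ** Q)" and "W \<in> generated_monoid X Y" and "0 < trace M"
    and "\<And>G. G \<in> {P, Q, P ** Q, Q ** P} \<Longrightarrow> 0 \<le> trace (G ** M)"
  shows "0 < trace (W ** M)"
proof -
  obtain c V where "0 < c" "V \<in> PQ_cone" and W: "W = c *\<^sub>R mat 1 + V"
    using generated_monoid_in_PQ_cone assms(1,2) by blast
  have "convex_cone {r :: real. 0 \<le> r}" by (simp add: convex_cone_iff)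
  then have "0 \<le> trace (V ** M)"
    using convex_cone_hull_linear_preimage[OF linear_trace_mult_right] \<open>V \<in> PQ_cone\<close> assms(4)
    unfolding PQ_cone_def by blast
  then show ?thesis
    using \<open>0 < c\<close> assms(3)
    by (simp add: W matrix_add_rdistrib matrix_scaleR_left trace_add trace_scaleR add_pos_nonneg)
qed

context
  fixes k :: nat
  assumes b_le_trace_PY: "b \<le> trace (P ** Y)"
    and trace_PY_sq_le: "trace (P ** Y)^2 \<le> a^3"
    and eigenvalue_gap: "b^2 + 1/b^2 < a^3 + 1/a^3"
begin

lemma one_le_trace_PQ: "1 \<le> trace (P ** Q)"
proof -
  have "0 \<le> (b - 1/b) * (trace (P ** Q) - 1)"
    using b_le_trace_PY by (simp add: trace_P_Y algebra_simps)
  moreover have "0 < b - 1/b" using b_gt_1 by (rule minus_inverse_pos)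
  ultimately show ?thesis by (simp add: zero_le_mult_iff)
qed

lemma trace_PY_bounds:
  shows "b * b \<le> b * trace (P ** Y)" and "b * trace (P ** Y) \<le> a^3"
    and "0 \<le> (trace (P ** Y))^2 - (b + 1/b) * trace (P ** Y) + 1"
proof -
  let ?m = "trace (P ** Y)"
  show "b * b \<le> b * ?m" using b_le_trace_PY b_gt_1 by simp
  have "b * ?m \<le> ?m * ?m" using b_le_trace_PY b_gt_1 by (simp add: mult_right_mono)
  then show "b * ?m \<le> a^3" using trace_PY_sq_le by (simp add: power2_eq_square)
  have "1/b \<le> b" using b_gt_1 minus_inverse_pos[of b] by simp
  then have "0 \<le> (?m - b) * (?m - 1/b)" using b_le_trace_PY by simp
  also have "\<dots> = ?m^2 - (b + 1/b) * ?m + 1"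
    using b_gt_1 by (simp add: field_simps power2_eq_square)
  finally show "0 \<le> ?m^2 - (b + 1/b) * ?m + 1" .
qed

lemma power_a_bounds: "1 \<le> a^k" "0 \<le> a^k - 1/a^k"
proof -
  show "1 \<le> a^k" using a_gt_1 by simp
  moreover from this have "1/a^k \<le> 1" by simp
  ultimately show "0 \<le> a^k - 1/a^k" by linarith
qed

lemma trace_gap_one: "0 < trace (mat_pow X (k + 3) - Y ** (mat_pow X k ** Y))"
proof -
  have "trace (mat_pow X (k + 3) - Y ** (mat_pow X k ** Y))
      = (a^k - 1/a^k) * (a^3 - (b + 1/b) * trace (P ** Y) + 1)
        + (a^3 + 1/a^3 - b^2 - 1/b^2) / a^k"
    unfolding mat_pow_X Y_eq using a_gt_1 b_gt_1
    by (simp only: normalize_words) (simp add: field_simps power_add eval_nat_numeral)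
  also have "\<dots> > 0"
  proof (rule add_nonneg_pos)
    show "0 \<le> (a^k - 1/a^k) * (a^3 - (b + 1/b) * trace (P ** Y) + 1)"
      using power_a_bounds trace_PY_bounds trace_PY_sq_le by simp
    show "0 < (a^3 + 1/a^3 - b^2 - 1/b^2) / a^k"
      using eigenvalue_gap a_gt_1 by simp
  qed
  finally show ?thesis .
qed

lemma trace_gap_P: "0 \<le> trace (P ** (mat_pow X (k + 3) - Y ** (mat_pow X k ** Y)))"
proof -
  have "trace (P ** (mat_pow X (k + 3) - Y ** (mat_pow X k ** Y)))
      = a^k * (a^3 - (trace (P ** Y))^2)
        + ((trace (P ** Y))^2 - (b + 1/b) * trace (P ** Y) + 1) / a^k"
    unfolding mat_pow_X Y_eq using a_gt_1 b_gt_1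
    by (simp only: normalize_words) (simp add: field_simps power_add eval_nat_numeral)
  also have "\<dots> \<ge> 0"
    using power_a_bounds trace_PY_bounds trace_PY_sq_le by simp
  finally show ?thesis .
qed

lemma trace_gap_Q: "0 \<le> trace (Q ** (mat_pow X (k + 3) - Y ** (mat_pow X k ** Y)))"
proof -
  have "trace (Q ** (mat_pow X (k + 3) - Y ** (mat_pow X k ** Y)))
      = a^k * trace (P ** Q) * (a^3 - b^2) + (trace (P ** Q) - 1) * (b^2 - 1/a^3) / a^k"
    unfolding mat_pow_X Y_eq using a_gt_1 b_gt_1
    by (simp only: normalize_words) (simp add: field_simps power_add eval_nat_numeral)
  also have "\<dots> \<ge> 0"
  proof -
    have "1/a^3 \<le> 1" "1 \<le> b^2" using a_gt_1 b_gt_1 by simp_all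
    moreover have "b^2 \<le> a^3" using trace_PY_bounds by (simp add: power2_eq_square)
    ultimately show ?thesis using power_a_bounds one_le_trace_PQ
      by (intro add_nonneg_nonneg mult_nonneg_nonneg divide_nonneg_pos) simp_all
  qed
  finally show ?thesis .
qed

lemma trace_gap_PQ: "0 \<le> trace (P ** Q ** (mat_pow X (k + 3) - Y ** (mat_pow X k ** Y)))"
proof -
  have "trace (P ** Q ** (mat_pow X (k + 3) - Y ** (mat_pow X k ** Y)))
      = trace (P ** Q) * (a^k * (a^3 - b * trace (P ** Y)) + (b * trace (P ** Y) - b^2) / a^k)"
    unfolding mat_pow_X Y_eq using a_gt_1 b_gt_1
    by (simp only: normalize_words) (simp add: field_simps power_add eval_nat_numeral)
  also have "\<dots> \<ge> 0"
    using power_a_bounds trace_PY_bounds one_le_trace_PQ by (simp add: power2_eq_square)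
  finally show ?thesis .
qed

lemma trace_gap_QP: "0 \<le> trace (Q ** P ** (mat_pow X (k + 3) - Y ** (mat_pow X k ** Y)))"
proof -
  have "trace (Q ** P ** (mat_pow X (k + 3) - Y ** (mat_pow X k ** Y)))
      = trace (P ** Q) * (a^k * (a^3 - b * trace (P ** Y)) + (b * trace (P ** Y) - b^2) / a^k)"
    unfolding mat_pow_X Y_eq using a_gt_1 b_gt_1
    by (simp only: normalize_words) (simp add: field_simps power_add eval_nat_numeral)
  also have "\<dots> \<ge> 0"
    using power_a_bounds trace_PY_bounds one_le_trace_PQ by (simp add: power2_eq_square)
  finally show ?thesis .
qed

theorem trace_YXY_less:
  assumes "W \<in> generated_monoid X Y"
  shows "trace (W ** (Y ** (mat_pow X k ** Y))) < trace (W ** mat_pow X (k + 3))"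
proof -
  have "0 < trace (W ** (mat_pow X (k + 3) - Y ** (mat_pow X k ** Y)))"
    using trace_mult_pos_on_generated_monoid[OF _ assms] one_le_trace_PQ
      trace_gap_one trace_gap_P trace_gap_Q trace_gap_PQ trace_gap_QP
    by auto
  then show ?thesis by (simp add: matrix_diff_ldistrib trace_sub)
qed

end

end

section \<open>Inequalities between the eigenvalues\<close>

lemma exists_plus_inverse_eq:
  fixes w :: real
  assumes "2 < w"
  shows "\<exists>a > 1. a + 1/a = w"
proof -
  define a where "a = (w + sqrt (w^2 - 4)) / 2"
  have "2 * 2 < w * w" using assms by (intro mult_strict_mono) auto
  then have "4 < w^2" by (simp add: power2_eq_square)
  then have root: "sqrt (w^2 - 4)^2 = w^2 - 4" and pos: "0 < sqrt (w^2 - 4)" by simp_all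
  have "1 < a" unfolding a_def using add_strict_mono[OF assms pos] by (simp add: field_simps)
  moreover have "a * a - w * a + 1 = 0"
    using root by (simp add: a_def power2_eq_square field_simps)
  then have "a + 1/a = w" using \<open>1 < a\<close> by (simp add: field_simps)
  ultimately show ?thesis by blast
qed

lemma le_of_plus_inverse_le:
  fixes r s :: real
  assumes "1 \<le> r" and "1 \<le> s" and "r + 1/r \<le> s + 1/s"
  shows "r \<le> s"
proof (rule ccontr)
  assume "\<not> r \<le> s"
  moreover have "r * 1 \<le> r * s" using assms(1,2) by (intro mult_left_mono) auto
  then have "1 < r * s" using assms(2) \<open>\<not> r \<le> s\<close> by linarith
  ultimately have "0 < (r - s) * (1 - 1 / (r * s))"
    by (intro mult_pos_pos) simp_all
  also have "(r - s) * (1 - 1 / (r * s)) = (r + 1/r) - (s + 1/s)"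
    using assms(1,2) by (simp add: field_simps)
  finally show False using assms(3) by simp
qed

(* The trace of P AB^2, for P the spectral projection of AB at its eigenvalue a,
   in terms of x = tr A and y = tr B (see trace_YXY_less_real). *)
definition proj_trace :: "real \<Rightarrow> real \<Rightarrow> real \<Rightarrow> real" where
  "proj_trace a x y = a^2 * (y * a - x) / (a^2 - 1)"

lemma proj_trace_plus_inverse:
  fixes a x y :: real
  assumes a: "1 < a" and u: "a \<le> y * a - x"
  shows "proj_trace a x y + 1 / proj_trace a x y - (y * (a + 1/a) - x)
    = ((a^2 - 1)^2 - a * (y * a - x) * (x * a - y)) / (a^2 * (a^2 - 1) * (y * a - x))"
proof -
  define u s where "u = y * a - x" and "s = a^2 - 1"
  have "1 < a^2" using a by (simp add: one_less_power)
  then have nz: "a \<noteq> 0" "u \<noteq> 0" "s \<noteq> 0" using a u unfolding u_def s_def by (simp_all, linarith)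
  have "proj_trace a x y + 1 / proj_trace a x y - (y * (a + 1/a) - x)
      = a^2 * u / s + s / (a^2 * u) - (a * u + y) / a"
    using a by (simp add: proj_trace_def u_def s_def field_simps)
  also have "\<dots> = (s^2 - a * u * (y * s - a * u)) / (a^2 * s * u)"
    using nz by (simp add: field_simps) (unfold s_def, algebra)
  also have "y * s - a * u = x * a - y" by (simp add: u_def s_def algebra_simps power2_eq_square)
  finally show ?thesis by (simp only: u_def s_def)
qed

lemma proj_trace_ge:
  fixes a b x y :: real
  assumes a: "1 < a" and x: "2 \<le> x" and y: "x + 1 \<le> y" and a_ge: "x * y + 1 \<le> a"
    and b: "1 \<le> b" and b_eq: "b + 1/b = y * (a + 1/a) - x"
  shows "b \<le> proj_trace a x y"
proof (rule le_of_plus_inverse_le[OF b])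
  define u where "u = y * a - x"
  have "x * 1 \<le> x * a" "(x + 1) * a \<le> y * a"
    using a x y by (intro mult_left_mono mult_right_mono; simp)+
  then have "a \<le> u" by (simp add: u_def algebra_simps)
  have "1 < a^2" using a by (simp add: one_less_power)
  then have "u * 1 \<le> u * (a^2 / (a^2 - 1))" using \<open>a \<le> u\<close> a by (intro mult_left_mono) simp_all
  then have "u \<le> proj_trace a x y" by (simp add: proj_trace_def u_def mult.commute)
  then show "1 \<le> proj_trace a x y" using \<open>a \<le> u\<close> a by linarith
  have "4 \<le> x^2" using power_mono[of 2 x 2] x by simp
  then have "1 \<le> x^2 + y^2 - 2" using zero_le_power2[of y] by linarith
  then have "1 * a \<le> (x^2 + y^2 - 2) * a" using a by (intro mult_right_mono) auto
  then have "x * y \<le> (x^2 + y^2 - 2) * a" using a_ge by linarith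
  then have "0 \<le> a^3 * (a - x * y) + a * ((x^2 + y^2 - 2) * a - x * y)" using a a_ge by simp
  also have "\<dots> + 1 = (a^2 - 1)^2 - a * u * (x * a - y)"
    by (simp add: u_def power2_eq_square power3_eq_cube algebra_simps)
  finally have "0 \<le> ((a^2 - 1)^2 - a * u * (x * a - y)) / (a^2 * (a^2 - 1) * u)"
    using \<open>1 < a^2\<close> \<open>a \<le> u\<close> a by (simp add: divide_nonneg_pos)
  then show "b + 1/b \<le> proj_trace a x y + 1 / proj_trace a x y"
    using proj_trace_plus_inverse[OF a \<open>a \<le> u\<close>[unfolded u_def]] b_eq by (simp add: u_def)
qed

lemma weighted_square_le_of_sq_le:
  fixes a x y :: real
  assumes a: "1 < a" and x: "2 \<le> x" and y: "x + 1 \<le> y" and a_ge: "x * y + 1 \<le> a"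
    and y_sq: "y^2 \<le> a + 1/a"
  shows "a * (y * a - x)^2 \<le> (a^2 - 1)^2"
proof -
  have "a^3 * (-1/a) \<le> a^3 * (a - y^2)" using a y_sq by (intro mult_left_mono) auto
  then have cube: "-(a^2) \<le> a^3 * (a - y^2)"
    using a by (simp add: power2_eq_square power3_eq_cube)
  have "2 * y \<le> x * y" using x y by (intro mult_right_mono) auto
  then have "x \<le> 2 * (x * y) - 3" and "x \<le> a" using x y a_ge by linarith+
  then have "x * x \<le> (2 * x * y - 3) * a" using x by (intro mult_mono) auto
  then have "x^2 * a \<le> (2 * x * y - 3) * a^2"
    using a by (simp add: power2_eq_square mult.assoc mult_right_mono)
  moreover have "(a^2 - 1)^2 - a * (y * a - x)^2
      = a^3 * (a - y^2) + (2 * x * y - 2) * a^2 - x^2 * a + 1"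
    by (simp add: power2_eq_square power3_eq_cube algebra_simps)
  ultimately show ?thesis using cube by (simp add: algebra_simps)
qed

lemma weighted_square_le_of_trace_bound:
  fixes a x y :: real
  assumes a: "1 < a" and x: "2 \<le> x" and y: "x + 1 \<le> y" and a_ge: "x * y + 1 \<le> a"
    and z_le: "a + 1/a \<le> y^2 - 1"
    and bound: "(y * (a + 1/a) - x)^2 \<le> (a + 1/a)^3 - 3 * (a + 1/a)"
  shows "a * (y * a - x)^2 \<le> (a^2 - 1)^2"
proof -
  have "a^3 * (y * (a + 1/a) - x)^2 = a * (y * a^2 - x * a + y)^2"
    and "a^3 * ((a + 1/a)^3 - 3 * (a + 1/a)) = a^6 + 1"
    using a by (simp_all add: eval_nat_numeral field_simps)
  then have H: "0 \<le> a^6 + 1 - a * (y * a^2 - x * a + y)^2"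
    using mult_left_mono[OF bound, of "a^3"] a by simp
  have "0 < 1/a" using a by simp
  then have "1 \<le> y^2 - a" using z_le by linarith
  then have "a * 1 \<le> a * (y^2 - a)" using a by (intro mult_left_mono) auto
  then have "0 \<le> 2 * a * (y^2 - a) + 1 - 2 * x * y" using a_ge by linarith
  then have B: "0 \<le> a^2 * (2 * a * (y^2 - a) + 1 - 2 * x * y)" by simp
  have "1 \<le> y" using x y by linarith
  then have "1 * 1 \<le> y^2 * a" using a by (intro mult_mono) (simp_all add: one_le_power)
  then have C: "0 \<le> y^2 * a - 1" by simp
  have "a^2 * ((a^2 - 1)^2 - a * (y * a - x)^2)
      = (a^6 + 1 - a * (y * a^2 - x * a + y)^2) + a^2 * (2 * a * (y^2 - a) + 1 - 2 * x * y)
        + (y^2 * a - 1)"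
    by (simp add: eval_nat_numeral algebra_simps)
  then have "0 \<le> a^2 * ((a^2 - 1)^2 - a * (y * a - x)^2)" using H B C by linarith
  then show ?thesis using a by (simp add: zero_le_mult_iff)
qed

lemma proj_trace_sq_le:
  fixes a x y :: real
  assumes "1 < a" and "a * (y * a - x)^2 \<le> (a^2 - 1)^2"
  shows "(proj_trace a x y)^2 \<le> a^3"
proof -
  have "1 < a^2" using assms(1) by (simp add: one_less_power)
  then have "a * (y * a - x)^2 / (a^2 - 1)^2 \<le> 1" using assms(2) by simp
  then have "a^3 * (a * (y * a - x)^2 / (a^2 - 1)^2) \<le> a^3 * 1"
    using assms(1) by (intro mult_left_mono) auto
  moreover have "(proj_trace a x y)^2 = a^3 * (a * (y * a - x)^2 / (a^2 - 1)^2)"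
    unfolding proj_trace_def power_divide by (simp add: power_mult_distrib eval_nat_numeral)
  ultimately show ?thesis by simp
qed

lemma eigenvalue_inequalities:
  fixes x y z :: real
  assumes x: "2 \<le> x" and y: "x + 1 \<le> y" and z: "y^2 - 1 \<le> z"
    and z_cases: "z \<le> y^2 - 1 \<or> y^2 \<le> z"
    and bound: "(y * z - x)^2 \<le> z^3 - 3 * z"
  obtains a b where "1 < a" "a + 1/a = z" "1 < b" "b + 1/b = y * z - x"
    "b \<le> proj_trace a x y" "(proj_trace a x y)^2 \<le> a^3" "b^2 + 1/b^2 < a^3 + 1/a^3"
proof -
  have "(x + 1) * y \<le> y * y" and "2 * 3 \<le> x * y"
    using x y by (intro mult_right_mono mult_mono; simp)+
  then have z_ge: "x * y + 2 \<le> z" using x y z by (simp add: power2_eq_square algebra_simps)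
  moreover have "y * 8 \<le> y * z" using x y z_ge \<open>2 * 3 \<le> x * y\<close> by (intro mult_left_mono) auto
  ultimately have "2 < z" "2 < y * z - x" using x y \<open>2 * 3 \<le> x * y\<close> by linarith+
  then obtain a b where a: "1 < a" "a + 1/a = z" and b: "1 < b" "b + 1/b = y * z - x"
    using exists_plus_inverse_eq by meson
  have "1/a < 1" using a by simp
  then have a_ge: "x * y + 1 \<le> a" using a z_ge by linarith
  have "b \<le> proj_trace a x y"
    using proj_trace_ge[OF a(1) x y a_ge] b by (simp add: a)
  moreover have "(proj_trace a x y)^2 \<le> a^3"
    using z_cases weighted_square_le_of_trace_bound[OF a(1) x y a_ge]
      weighted_square_le_of_sq_le[OF a(1) x y a_ge] bound proj_trace_sq_le[OF a(1)]
    by (auto simp: a)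
  moreover have "b^2 + 1/b^2 < a^3 + 1/a^3"
  proof -
    have "b^2 + 1/b^2 = (b + 1/b)^2 - 2" using b(1) by (simp add: power2_eq_square field_simps)
    moreover have "a^3 + 1/a^3 = (a + 1/a)^3 - 3 * (a + 1/a)"
      using a(1) by (simp add: eval_nat_numeral field_simps)
    ultimately have "b^2 + 1/b^2 = (y * z - x)^2 - 2" "a^3 + 1/a^3 = z^3 - 3 * z"
      by (simp_all only: a b)
    then show ?thesis using bound by simp
  qed
  ultimately show ?thesis using that a b by blast
qed

section \<open>Real matrices A and B\<close>

definition spectral_projection :: "real \<Rightarrow> real^2^2 \<Rightarrow> real^2^2" where
  "spectral_projection a X = (1 / (a^2 - 1)) *\<^sub>R (a *\<^sub>R X - mat 1)"

lemma spectral_projection_decomposition: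
  fixes X :: "real^2^2"
  assumes det: "det X = 1" and tr: "trace X = a + 1/a" and a: "1 < a"
  shows "trace (spectral_projection a X) = 1" and "det (spectral_projection a X) = 0"
    and "X = (1/a) *\<^sub>R mat 1 + (a - 1/a) *\<^sub>R spectral_projection a X"
proof -
  have "1 < a^2" using a by (simp add: one_less_power)
  then have nz: "a^2 - 1 \<noteq> 0" "a \<noteq> 0" using a by linarith+
  have "trace (spectral_projection a X) = (a * (a + 1/a) - 2) / (a^2 - 1)"
    by (simp add: spectral_projection_def trace_sub trace_scaleR tr trace_I)
  also have "\<dots> = 1" using nz by (simp add: field_simps power2_eq_square)
  finally show "trace (spectral_projection a X) = 1" .
  have "X$1$1 * X$2$2 - X$1$2 * X$2$1 = 1" and "a * (X$1$1 + X$2$2) = a^2 + 1"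
    using det tr nz by (simp_all add: det_2 trace_def sum_2 field_simps power2_eq_square)
  then show "det (spectral_projection a X) = 0"
    by (simp add: spectral_projection_def det_2 mat_def) algebra
  have "(a - 1/a) * (1 / (a^2 - 1)) = 1/a" using nz by (simp add: field_simps power2_eq_square)
  then have "(1/a) *\<^sub>R mat 1 + (a - 1/a) *\<^sub>R spectral_projection a X
      = (1/a) *\<^sub>R mat 1 + (1/a) *\<^sub>R (a *\<^sub>R X - mat 1)"
    by (simp only: spectral_projection_def scaleR_scaleR)
  also have "\<dots> = X" using nz by (simp add: algebra_simps)
  finally show "X = (1/a) *\<^sub>R mat 1 + (a - 1/a) *\<^sub>R spectral_projection a X" ..
qed

lemma trace_YXY_less_real:
  fixes A B W :: "real^2^2"
  assumes det: "det A = 1" "det B = 1"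
    and x: "2 \<le> trace A" and y: "trace A + 1 \<le> trace B"
    and z: "(trace B)^2 - 1 \<le> trace (A ** B)"
    and z_cases: "trace (A ** B) \<le> (trace B)^2 - 1 \<or> (trace B)^2 \<le> trace (A ** B)"
    and hyp: "trace (mat_pow (A ** B ** B) 2) \<le> trace (mat_pow (A ** B) 3) - 2"
    and W: "W \<in> generated_monoid (A ** B) (A ** B ** B)"
  shows "trace (W ** (A ** B ** B ** (mat_pow (A ** B) k ** (A ** B ** B))))
    < trace (W ** mat_pow (A ** B) (k + 3))"
proof -
  define X Y where "X = A ** B" and "Y = A ** B ** B"
  have det_XY: "det X = 1" "det Y = 1" using det by (simp_all add: X_def Y_def det_mul)
  have tY: "trace Y = trace B * trace X - trace A"
    unfolding X_def Y_def by (rule trace_mult_square[OF det(2)])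
  have "Y = X ** B" by (simp add: X_def Y_def)
  then have "trace (X ** Y) = trace (B ** X ** X)"
    by (simp add: matrix_mul_assoc trace_mul_sym[of "X ** X" B])
  also have "\<dots> = trace X * trace Y - trace B"
    by (simp add: trace_mult_square[OF det_XY(1)] \<open>Y = X ** B\<close> trace_mul_sym[of B X])
  finally have tXY: "trace (X ** Y) = trace X * trace Y - trace B" .
  have "(trace B * trace X - trace A)^2 \<le> (trace X)^3 - 3 * trace X"
    using hyp trace_mat_pow_2x2[OF det_XY(2)] trace_mat_pow_2x2[OF det_XY(1)] tY
    by (simp add: X_def Y_def)
  then obtain a b where a: "1 < a" "a + 1/a = trace X" and b: "1 < b" "b + 1/b = trace Y"
    and ineqs: "b \<le> proj_trace a (trace A) (trace B)"
      "(proj_trace a (trace A) (trace B))^2 \<le> a^3" "b^2 + 1/b^2 < a^3 + 1/a^3"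
    using eigenvalue_inequalities[OF x y] z z_cases tY unfolding X_def by metis
  define P Q where "P = spectral_projection a X" and "Q = spectral_projection b Y"
  interpret hyperbolic_pair X Y P Q a b
    using spectral_projection_decomposition[OF det_XY(1) a(2)[symmetric] a(1)]
      spectral_projection_decomposition[OF det_XY(2) b(2)[symmetric] b(1)] a(1) b(1)
    by unfold_locales (simp_all add: P_def Q_def)
  have "trace (P ** Y) = (a * trace (X ** Y) - trace Y) / (a^2 - 1)"
    by (simp add: P_def spectral_projection_def matrix_expand trace_sub trace_scaleR)
  also have "a * trace (X ** Y) - trace Y = a^2 * (trace B * a - trace A)"
    using a(1) by (simp add: tXY tY a(2)[symmetric] field_simps power2_eq_square)
  finally have "trace (P ** Y) = proj_trace a (trace A) (trace B)"
    by (simp add: proj_trace_def)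
  then show ?thesis
    using trace_YXY_less[where k = k] ineqs W by (simp add: X_def Y_def)
qed

section \<open>Words in A and B\<close>

definition real_mat :: "int^'n^'m \<Rightarrow> real^'n^'m" where
  "real_mat M = (\<chi> i j. of_int (M $ i $ j))"

lemma real_mat_mult: "real_mat (M ** N) = real_mat M ** real_mat N"
  by (simp add: real_mat_def matrix_matrix_mult_def vec_eq_iff)

lemma real_mat_one: "real_mat (mat 1) = mat 1"
  by (simp add: real_mat_def mat_def vec_eq_iff)

lemma trace_real_mat: "trace (real_mat M) = of_int (trace M)"
  by (simp add: real_mat_def trace_def)

lemma det_real_mat: "det (real_mat (M :: int^2^2)) = of_int (det M)"
  by (simp add: real_mat_def det_2)

lemma real_mat_mat_pow: "real_mat (mat_pow M n) = mat_pow (real_mat M) n"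
  by (induction n) (simp_all add: real_mat_one real_mat_mult)

lemma real_mat_generated_monoid:
  "W \<in> generated_monoid X Y \<Longrightarrow> real_mat W \<in> generated_monoid (real_mat X) (real_mat Y)"
  by (induction rule: generated_monoid.induct)
    (simp_all add: real_mat_one real_mat_mult generated_monoid.intros)

lemma phi_Nil [simp]: "phi A B [] = mat 1"
  by (simp add: phi_def)

lemma phi_Cons [simp]: "phi A B (c # w) = (case c of La \<Rightarrow> A | Lb \<Rightarrow> B) ** phi A B w"
  by (simp add: phi_def)

lemma phi_append: "phi A B (u @ v) = phi A B u ** phi A B v"
  by (induction u) (simp_all add: matrix_mul_assoc)

lemma phi_pw: "phi A B (pw u n) = mat_pow (phi A B u) n"
  by (induction n) (simp_all add: pw_def phi_append)

lemma phi_concat_in_generated_monoid: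
  assumes "set us \<subseteq> {[La, Lb], [La, Lb, Lb]}"
  shows "phi A B (concat us) \<in> generated_monoid (A ** B) (A ** B ** B)"
  using assms
proof (induction us rule: rev_induct)
  case (snoc u us)
  then have "phi A B (concat us) \<in> generated_monoid (A ** B) (A ** B ** B)"
    and "phi A B u = A ** B \<or> phi A B u = A ** B ** B"
    by (auto simp: matrix_mul_assoc)
  then show ?case by (auto simp: phi_append intro: generated_monoid.intros)
qed (simp add: generated_monoid.one)

lemma of_int_wtr: "of_int (wtr A B v) = trace (real_mat (phi A B v))"
  by (simp add: wtr_def trace_real_mat)

lemma trace_real_mat_mult_bounds:
  fixes A B :: mat2
  assumes "B \<in> SL2Z" and "trace (B ** B) < trace (A ** B)"
  shows "(trace (real_mat B))^2 - 1 \<le> trace (real_mat A ** real_mat B)"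
    and "trace (real_mat A ** real_mat B) \<le> (trace (real_mat B))^2 - 1
      \<or> (trace (real_mat B))^2 \<le> trace (real_mat A ** real_mat B)"
proof -
  have "real_of_int (trace (B ** B) + 1) \<le> of_int (trace (A ** B))"
    using assms(2) by (simp only: of_int_le_iff)
  moreover have "det (real_mat B) = 1" using assms(1) by (simp add: SL2Z_def det_real_mat)
  ultimately show "(trace (real_mat B))^2 - 1 \<le> trace (real_mat A ** real_mat B)"
    using trace_mult_square[of "real_mat B" "mat 1"]
    by (simp add: trace_real_mat real_mat_mult[symmetric] trace_I power2_eq_square)
  have "trace (A ** B) \<le> (trace B)^2 - 1 \<or> (trace B)^2 \<le> trace (A ** B)" by linarith
  then show "trace (real_mat A ** real_mat B) \<le> (trace (real_mat B))^2 - 1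
      \<or> (trace (real_mat B))^2 \<le> trace (real_mat A ** real_mat B)"
    unfolding trace_real_mat real_mat_mult[symmetric]
    by (metis of_int_le_iff of_int_power of_int_diff of_int_1)
qed

theorem lemma7p2:
  fixes A B :: mat2 and w :: "letter list" and k :: nat
  assumes "A \<in> SL2Z" and "B \<in> SL2Z"
    and "A ** B \<noteq> B ** A"
    and "well_oriented A B"
    and "2 \<le> trace A" and "trace A < trace B"
    and "trace (A ** B) > trace (B ** B)"
    and "wtr A B (pw [La, Lb, Lb] 2) \<le> wtr A B (pw [La, Lb] 3) - 2"
    and "k \<ge> 1"
    and "6 dvd length (w @ [La, Lb, Lb] @ pw [La, Lb] k @ [La, Lb, Lb])"
    and "w = [] \<or> (\<exists>us. set us \<subseteq> {[La, Lb], [La, Lb, Lb]} \<and> w = concat us)"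
  shows "wtr A B (w @ [La, Lb, Lb] @ pw [La, Lb] k @ [La, Lb, Lb])
         < wtr A B (w @ pw [La, Lb] (k + 3))"
proof -
  obtain us where "set us \<subseteq> {[La, Lb], [La, Lb, Lb]}" and "w = concat us"
    using assms(11) by (metis concat.simps(1) empty_set empty_subsetI)
  then have W: "real_mat (phi A B w)
      \<in> generated_monoid (real_mat A ** real_mat B) (real_mat A ** real_mat B ** real_mat B)"
    using real_mat_generated_monoid phi_concat_in_generated_monoid by (fastforce simp: real_mat_mult)
  have det: "det (real_mat A) = 1" "det (real_mat B) = 1"
    using assms(1,2) by (simp_all add: SL2Z_def det_real_mat)
  have x_y: "2 \<le> trace (real_mat A)" "trace (real_mat A) + 1 \<le> trace (real_mat B)"
    using assms(5,6) by (simp_all add: trace_real_mat)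
  have "of_int (wtr A B (pw [La, Lb, Lb] 2)) \<le> real_of_int (wtr A B (pw [La, Lb] 3)) - 2"
    using assms(8) by linarith
  then have "trace (mat_pow (real_mat A ** real_mat B ** real_mat B) 2)
      \<le> trace (mat_pow (real_mat A ** real_mat B) 3) - 2"
    by (simp add: of_int_wtr phi_pw real_mat_mat_pow real_mat_mult matrix_mul_assoc)
  from trace_YXY_less_real[OF det x_y trace_real_mat_mult_bounds[OF assms(2,7)] this W, of k]
  have "of_int (wtr A B (w @ [La, Lb, Lb] @ pw [La, Lb] k @ [La, Lb, Lb]))
      < real_of_int (wtr A B (w @ pw [La, Lb] (k + 3)))"
    by (simp add: of_int_wtr phi_append phi_pw real_mat_mat_pow real_mat_mult matrix_mul_assoc)
  then show ?thesis by simp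
qed

end
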